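(* Fix $b>0$ and consider, for $\varepsilon\in(-b,\infty)$, the functions $\alpha(\varepsilon),\beta(\varepsilon),\gamma(\varepsilon)$ defined in the context. Then: $\alpha$ and $\beta$ are strictly decreasing in $\varepsilon$; $\gamma$, $\gamma-\alpha-2\beta$, $\gamma-\alpha+2\beta$ and $\gamma-\alpha$ are strictly increasing in $\varepsilon$; $\alpha+\gamma$ has a unique minimum at $\varepsilon=0$. Moreover $\alpha(0)=\gamma(0)=1$ and $\beta(0)=0$ for every $b>0$.
   Context: With $t=(b+\varepsilon)/b$: $\alpha=-t^2+2t-\frac4t+\frac4{t^2}$, $\beta=-t^3+t^2+t-3+\frac2t$, $\gamma=t^4-t^2+2t-1$. (These are the entries of the matrix $P(b,\varepsilon,0)=\begin{pmatrix}\alpha&\beta\\-\beta&\gamma\end{pmatrix}$, where $P(b,\varepsilon,k)$ is a transfer matrix of the tight-binding model.) *)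

theory Defs
  imports Complex_Main
begin

definition tpar :: "real \<Rightarrow> real \<Rightarrow> real" where
  "tpar b \<epsilon> = (b + \<epsilon>) / b"

definition alpha :: "real \<Rightarrow> real \<Rightarrow> real" where
  "alpha b \<epsilon> = (let t = tpar b \<epsilon> in -(t^2) + 2*t - 4/t + 4/t^2)"

definition beta :: "real \<Rightarrow> real \<Rightarrow> real" where
  "beta b \<epsilon> = (let t = tpar b \<epsilon> in -(t^3) + t^2 + t - 3 + 2/t)"

definition gamma :: "real \<Rightarrow> real \<Rightarrow> real" where
  "gamma b \<epsilon> = (let t = tpar b \<epsilon> in t^4 -(t^2) + 2*t - 1)"

end

theory Submission
  imports Defs
begin

text \<open>Every function in the statement is a rational function of \<open>t = (b + \<epsilon>)/b\<close>, and
  \<open>\<epsilon> \<mapsto> t\<close> maps \<open>(-b, \<infinity>)\<close> increasingly into \<open>(0, \<infinity>)\<close>, so it suffices to study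
  them as functions of \<open>t > 0\<close>. There each derivative, cleared of its denominator \<open>t\<^sup>k\<close>,
  is a polynomial that is positive (or negative) for \<open>t > 0\<close>, as an explicit sum of squares and
  of terms nonnegative for \<open>t \<ge> 0\<close> shows. For the minimum,
  \<open>\<alpha> + \<gamma> - 2 = (t - 1)\<^sup>2 (t\<^sup>4 + 2t\<^sup>3 + t\<^sup>2 + 4t + 4) / t\<^sup>2\<close>.\<close>

lemma strict_mono_on_greaterThan_if_deriv_pos:
  fixes f f' :: "real \<Rightarrow> real"
  assumes "\<And>x. a < x \<Longrightarrow> (f has_real_derivative f' x) (at x)"
    and "\<And>x. a < x \<Longrightarrow> 0 < f' x"
  shows "strict_mono_on {a<..} f"
proof (rule strict_mono_onI)
  fix r s assume "r \<in> {a<..}" "r < s"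
  show "f r < f s"
  proof (rule DERIV_pos_imp_increasing[OF \<open>r < s\<close>])
    fix x assume "r \<le> x"
    with \<open>r \<in> {a<..}\<close> have "a < x" by simp
    then show "\<exists>y. (f has_real_derivative y) (at x) \<and> 0 < y"
      using assms by blast
  qed
qed

lemma strict_antimono_on_greaterThan_if_deriv_neg:
  fixes f f' :: "real \<Rightarrow> real"
  assumes "\<And>x. a < x \<Longrightarrow> (f has_real_derivative f' x) (at x)"
    and "\<And>x. a < x \<Longrightarrow> f' x < 0"
  shows "strict_antimono_on {a<..} f"
proof (rule monotone_onI)
  fix r s assume "r \<in> {a<..}" "r < s"
  show "f s < f r"
  proof (rule DERIV_neg_imp_decreasing[OF \<open>r < s\<close>])
    fix x assume "r \<le> x"
    with \<open>r \<in> {a<..}\<close> have "a < x" by simp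
    then show "\<exists>y. (f has_real_derivative y) (at x) \<and> y < 0"
      using assms by blast
  qed
qed

lemma tpar_pos: "0 < b \<Longrightarrow> -b < \<epsilon> \<Longrightarrow> 0 < tpar b \<epsilon>"
  by (simp add: tpar_def)

lemma tpar_eq_1_iff: "b \<noteq> 0 \<Longrightarrow> tpar b \<epsilon> = 1 \<longleftrightarrow> \<epsilon> = 0"
  by (simp add: tpar_def)

lemma monotone_on_comp_tpar:
  assumes "0 < b" and "monotone_on {0<..} (<) ord f"
  shows "monotone_on {-b<..} (<) ord (f \<circ> tpar b)"
proof (rule monotone_on_o[OF assms(2)])
  show "strict_mono_on {-b<..} (tpar b)"
    using \<open>0 < b\<close> by (intro strict_mono_onI) (simp add: tpar_def divide_strict_right_mono)
  show "tpar b ` {-b<..} \<subseteq> {0<..}"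
    using \<open>0 < b\<close> by (auto intro: tpar_pos)
qed

definition alpha_t :: "real \<Rightarrow> real" where
  "alpha_t t = -(t^2) + 2*t - 4/t + 4/t^2"

definition beta_t :: "real \<Rightarrow> real" where
  "beta_t t = -(t^3) + t^2 + t - 3 + 2/t"

definition gamma_t :: "real \<Rightarrow> real" where
  "gamma_t t = t^4 - t^2 + 2*t - 1"

lemma alpha_beta_gamma_t_at_1 [simp]: "alpha_t 1 = 1" "beta_t 1 = 0" "gamma_t 1 = 1"
  by (simp_all add: alpha_t_def beta_t_def gamma_t_def)

lemma alpha_eq: "alpha b = alpha_t \<circ> tpar b"
  by (simp add: fun_eq_iff Let_def alpha_def alpha_t_def)

lemma beta_eq: "beta b = beta_t \<circ> tpar b"
  by (simp add: fun_eq_iff Let_def beta_def beta_t_def)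

lemma gamma_eq: "gamma b = gamma_t \<circ> tpar b"
  by (simp add: fun_eq_iff Let_def gamma_def gamma_t_def)

lemma alpha_t_has_real_derivative:
  "x \<noteq> 0 \<Longrightarrow> (alpha_t has_real_derivative - (2*x^4 - 2*x^3 - 4*x + 8) / x^3) (at x)"
  unfolding alpha_t_def[abs_def]
  by (auto intro!: derivative_eq_intros simp: field_simps eval_nat_numeral)

lemma beta_t_has_real_derivative:
  "x \<noteq> 0 \<Longrightarrow> (beta_t has_real_derivative - (3*x^4 - 2*x^3 - x^2 + 2) / x^2) (at x)"
  unfolding beta_t_def[abs_def]
  by (auto intro!: derivative_eq_intros simp: field_simps eval_nat_numeral)

lemma gamma_t_has_real_derivative:
  "(gamma_t has_real_derivative 4*x^3 - 2*x + 2) (at x)"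
  unfolding gamma_t_def[abs_def]
  by (auto intro!: derivative_eq_intros simp: field_simps eval_nat_numeral)

lemma alpha_t_strict_antimono: "strict_antimono_on {0<..} alpha_t"
proof (rule strict_antimono_on_greaterThan_if_deriv_neg[OF alpha_t_has_real_derivative])
  fix x :: real assume "0 < x"
  have "2*x^4 - 2*x^3 - 4*x + 8 = 2*(x^2 - x/2 - 1)^2 + 7/2*(x - 6/7)^2 + 24/7"
    by algebra
  also have "\<dots> > 0"
    by (intro add_nonneg_pos add_nonneg_nonneg) simp_all
  finally show "- (2*x^4 - 2*x^3 - 4*x + 8) / x^3 < 0"
    using \<open>0 < x\<close> by (intro divide_neg_pos) simp_all
qed simp

lemma beta_t_strict_antimono: "strict_antimono_on {0<..} beta_t"
proof (rule strict_antimono_on_greaterThan_if_deriv_neg[OF beta_t_has_real_derivative])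
  fix x :: real assume "0 < x"
  have "3*x^4 - 2*x^3 - x^2 + 2 = x^2*(x - 1)^2 + 2*(x^2 - 1/2)^2 + 3/2"
    by algebra
  also have "\<dots> > 0"
    by (intro add_nonneg_pos add_nonneg_nonneg) simp_all
  finally show "- (3*x^4 - 2*x^3 - x^2 + 2) / x^2 < 0"
    using \<open>0 < x\<close> by (intro divide_neg_pos) simp_all
qed simp

lemma gamma_t_strict_mono: "strict_mono_on {0<..} gamma_t"
proof (rule strict_mono_on_greaterThan_if_deriv_pos[OF gamma_t_has_real_derivative])
  fix x :: real assume "0 < x"
  have "4*x^3 - 2*x + 2 = 4*x*(x - 1/2)^2 + 4*(x - 3/8)^2 + 23/16"
    by algebra
  also have "\<dots> > 0"
    using \<open>0 < x\<close> by (intro add_nonneg_pos add_nonneg_nonneg) simp_all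
  finally show "4*x^3 - 2*x + 2 > 0" .
qed

lemma gamma_t_minus_alpha_t_minus_2_beta_t_strict_mono:
  "strict_mono_on {0<..} (\<lambda>t. gamma_t t - alpha_t t - 2 * beta_t t)"
proof (rule strict_mono_on_greaterThan_if_deriv_pos)
  fix x :: real assume "0 < x"
  then show "((\<lambda>t. gamma_t t - alpha_t t - 2 * beta_t t) has_real_derivative
      (4*x^6 + 6*x^5 - 4*x^4 - 2*x^3 + 8) / x^3) (at x)"
    by (auto intro!: derivative_eq_intros alpha_t_has_real_derivative beta_t_has_real_derivative
        gamma_t_has_real_derivative simp: field_simps eval_nat_numeral)
  have "4*x^6 + 6*x^5 - 4*x^4 - 2*x^3 + 8
      = (2*x^3 + 3/2*x^2 - 2*x - 1)^2 + 7/4*x^4 + 8*x*(x - 1/2)^2 + 7*(x - 3/7)^2 + 40/7"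
    by algebra
  also have "\<dots> > 0"
    using \<open>0 < x\<close> by (intro add_nonneg_pos add_nonneg_nonneg) simp_all
  finally show "0 < (4*x^6 + 6*x^5 - 4*x^4 - 2*x^3 + 8) / x^3"
    using \<open>0 < x\<close> by simp
qed

lemma gamma_t_minus_alpha_t_plus_2_beta_t_strict_mono:
  "strict_mono_on {0<..} (\<lambda>t. gamma_t t - alpha_t t + 2 * beta_t t)"
proof (rule strict_mono_on_greaterThan_if_deriv_pos)
  fix x :: real assume "0 < x"
  then show "((\<lambda>t. gamma_t t - alpha_t t + 2 * beta_t t) has_real_derivative
      (4*x^6 - 6*x^5 + 4*x^4 + 2*x^3 - 8*x + 8) / x^3) (at x)"
    by (auto intro!: derivative_eq_intros alpha_t_has_real_derivative beta_t_has_real_derivative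
        gamma_t_has_real_derivative simp: field_simps eval_nat_numeral)
  have "4*x^6 - 6*x^5 + 4*x^4 + 2*x^3 - 8*x + 8
      = x^4*(2*x - 3/2)^2 + 7/4*(x^2 - 1)^2 + 7/2*(x - 8/7)^2 + 2*x^3 + 47/28"
    by algebra
  also have "\<dots> > 0"
    using \<open>0 < x\<close> by (intro add_nonneg_pos add_nonneg_nonneg) simp_all
  finally show "0 < (4*x^6 - 6*x^5 + 4*x^4 + 2*x^3 - 8*x + 8) / x^3"
    using \<open>0 < x\<close> by simp
qed

lemma gamma_t_minus_alpha_t_strict_mono:
  "strict_mono_on {0<..} (\<lambda>t. gamma_t t - alpha_t t)"
proof (rule strict_mono_on_greaterThan_if_deriv_pos)
  fix x :: real assume "0 < x"
  then show "((\<lambda>t. gamma_t t - alpha_t t) has_real_derivative (4*x^6 - 4*x + 8) / x^3) (at x)"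
    by (auto intro!: derivative_eq_intros alpha_t_has_real_derivative gamma_t_has_real_derivative
        simp: field_simps eval_nat_numeral)
  have "4*x^6 - 4*x + 8 = 4*x^2*(x^2 - 1)^2 + 8*(x^2 - 1/2)^2 + 4*(x - 1/2)^2 + 5"
    by algebra
  also have "\<dots> > 0"
    using \<open>0 < x\<close> by (intro add_nonneg_pos add_nonneg_nonneg) simp_all
  finally show "0 < (4*x^6 - 4*x + 8) / x^3"
    using \<open>0 < x\<close> by simp
qed

lemma alpha_t_plus_gamma_t_gt_2:
  assumes "0 < t" and "t \<noteq> 1"
  shows "2 < alpha_t t + gamma_t t"
proof -
  have "alpha_t t + gamma_t t = 2 + (t - 1)^2 * (t^4 + 2*t^3 + t^2 + 4*t + 4) / t^2"
    using \<open>0 < t\<close> by (simp add: alpha_t_def gamma_t_def field_simps eval_nat_numeral)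
  moreover have "0 < (t - 1)^2 * (t^4 + 2*t^3 + t^2 + 4*t + 4) / t^2"
    using assms by (simp add: add_pos_nonneg)
  ultimately show ?thesis
    by linarith
qed

theorem lemma7:
  fixes b :: real
  assumes "b > 0"
  shows "strict_antimono_on {-b<..} (alpha b)
    \<and> strict_antimono_on {-b<..} (beta b)
    \<and> strict_mono_on {-b<..} (gamma b)
    \<and> strict_mono_on {-b<..} (\<lambda>\<epsilon>. gamma b \<epsilon> - alpha b \<epsilon> - 2 * beta b \<epsilon>)
    \<and> strict_mono_on {-b<..} (\<lambda>\<epsilon>. gamma b \<epsilon> - alpha b \<epsilon> + 2 * beta b \<epsilon>)
    \<and> strict_mono_on {-b<..} (\<lambda>\<epsilon>. gamma b \<epsilon> - alpha b \<epsilon>)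
    \<and> (\<forall>\<epsilon>\<in>{-b<..}. \<epsilon> \<noteq> 0 \<longrightarrow> alpha b 0 + gamma b 0 < alpha b \<epsilon> + gamma b \<epsilon>)
    \<and> alpha b 0 = 1 \<and> gamma b 0 = 1 \<and> beta b 0 = 0"
proof -
  note comp = monotone_on_comp_tpar[OF assms]
  have tpar_0: "tpar b 0 = 1"
    using assms by (simp add: tpar_eq_1_iff)
  have "alpha b 0 + gamma b 0 < alpha b \<epsilon> + gamma b \<epsilon>" if "-b < \<epsilon>" "\<epsilon> \<noteq> 0" for \<epsilon>
    using alpha_t_plus_gamma_t_gt_2[of "tpar b \<epsilon>"] that assms
    by (simp add: alpha_eq gamma_eq tpar_0 tpar_pos tpar_eq_1_iff)
  then show ?thesis
    using comp[OF alpha_t_strict_antimono] comp[OF beta_t_strict_antimono]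
      comp[OF gamma_t_strict_mono] comp[OF gamma_t_minus_alpha_t_minus_2_beta_t_strict_mono]
      comp[OF gamma_t_minus_alpha_t_plus_2_beta_t_strict_mono]
      comp[OF gamma_t_minus_alpha_t_strict_mono]
    by (simp add: alpha_eq beta_eq gamma_eq tpar_0 o_def)
qed

end
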